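(* Let $P=(X,D,C)$ be a St-CSP and suppose $(C,\emptyset)\rightsquigarrow\cdots\rightsquigarrow(C_0,C_1)$ by applications of rules (R1)–(R3), introducing the set $Y$ of auxiliary variables. Let $P'$ be the St-CSP with variables $X\cup Y$, the same domains as $P$ on $X$, domain $\mathbb{Z}^\omega$ (all integer streams) for each variable in $Y$, and constraint set $C_0\cup C_1$. Then an assignment $A$ of the variables $X$ is a solution of $P$ if and only if $A$ extends to a solution of $P'$; that is, $sol(P)$ equals the projection of $sol(P')$ onto $X$.
   Context: Streams are functions $\mathbb{N}_0\to\mathbb{Z}$; for a finite alphabet $\Sigma$, $\Sigma^\omega$ is the set of streams with values in $\Sigma$. A St-CSP is a triple $(X,D,C)$ with a finite set $X$ of stream variables, domains $D(x)=\Sigma(x)^\omega$, and a finite set $C$ of stream constraints; $sol(P)$ is the set of assignments of streams in the domains to the variables satisfying all constraints. Stream expressions are built from stream variables and constant streams using pointwise operators (arithmetic, relational operators returning $0/1$ streams, Boolean and/or/not, if-then-else, each applied pointwise via fixed total functions on integers) and the temporal operators $\mathtt{first}$ ($(\mathtt{first}\,a)(i)=a(0)$), $\mathtt{next}$ ($(\mathtt{next}\,a)(i)=a(i+1)$) and $\mathtt{fby}$ ($(a\ \mathtt{fby}\ b)(0)=a(0)$, $(a\ \mathtt{fby}\ b)(i)=b(i-1)$ for $i\ge1$). A stream constraint is one of: $e_1\,R\,e_2$ with $R\in\{<,\le,==,\ge,>,\ne\}$ (satisfied iff $R$ holds at every time point), $e_1\ \mathtt{->}\ e_2$ (satisfied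 iff for all $i$, $e_1(i)\ne0$ implies $e_2(i)\ne0$), or $e_1\ \mathtt{until}\ e_2$ (satisfied iff there is $i\ge0$ with $e_1(j)\ne0$ for all $j<i$ and $e_2(i)\ne0$); $\mathtt{until}$ occurs only as the outermost constructor. A constraint context $c[\_]$ is a constraint with one expression occurrence replaced by a placeholder; $c[e]$ denotes substitution. The rewriting rules on pairs $(C_0,C_1)$ of constraint sets are (all $x_k$ fresh variables): (R1) $(C_0\cup\{c[\mathtt{next}\ e]\},C_1)\rightsquigarrow(C_0\cup\{c[x_1],\ x_2==e\},\ C_1\cup\{x_1==\mathtt{next}\ x_2\})$; (R2) $(C_0\cup\{c[e_1\ \mathtt{fby}\ e_2]\},C_1)\rightsquigarrow(C_0\cup\{c[x_1],\ x_2==e_1,\ x_3==e_2\},\ C_1\cup\{\mathtt{first}\ x_1==\mathtt{first}\ x_2,\ x_3==\mathtt{next}\ x_1\})$; (R3) $(C_0\cup\{e_1\ \mathtt{until}\ e_2\},C_1)\rightsquigarrow(C_0\cup\{x_1==e_1,\ x_2==e_2\},\ C_1\cup\{x_1\ \mathtt{until}\ x_2\})$. *)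

theory Defs
  imports Main
begin

type_synonym stream = "nat \<Rightarrow> int"

text \<open>Pointwise operators (arithmetic, relational, Boolean,
if-then-else) are each given by a fixed total function on integers applied pointwise;
we allow arbitrary unary, binary and ternary such functions.\<close>
datatype 'v sexpr =
    Var 'v
  | Const stream
  | Op1 "int \<Rightarrow> int" "'v sexpr"
  | Op2 "int \<Rightarrow> int \<Rightarrow> int" "'v sexpr" "'v sexpr"
  | Op3 "int \<Rightarrow> int \<Rightarrow> int \<Rightarrow> int" "'v sexpr" "'v sexpr" "'v sexpr"
  | First "'v sexpr"
  | Next "'v sexpr"
  | Fby "'v sexpr" "'v sexpr"

datatype rel = Lt | Le | Eq | Ge | Gt | Ne

datatype 'v sconstr =
    Rel rel "'v sexpr" "'v sexpr"
  | Impl "'v sexpr" "'v sexpr"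
  | Until "'v sexpr" "'v sexpr"

fun eval :: "('v \<Rightarrow> stream) \<Rightarrow> 'v sexpr \<Rightarrow> stream" where
  "eval A (Var x) = A x"
| "eval A (Const s) = s"
| "eval A (Op1 f a) = (\<lambda>i. f (eval A a i))"
| "eval A (Op2 f a b) = (\<lambda>i. f (eval A a i) (eval A b i))"
| "eval A (Op3 f a b c) = (\<lambda>i. f (eval A a i) (eval A b i) (eval A c i))"
| "eval A (First a) = (\<lambda>i. eval A a 0)"
| "eval A (Next a) = (\<lambda>i. eval A a (Suc i))"
| "eval A (Fby a b) = (\<lambda>i. if i = 0 then eval A a 0 else eval A b (i - 1))"

fun rel_sem :: "rel \<Rightarrow> int \<Rightarrow> int \<Rightarrow> bool" where
  "rel_sem Lt a b = (a < b)"
| "rel_sem Le a b = (a \<le> b)"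
| "rel_sem Eq a b = (a = b)"
| "rel_sem Ge a b = (a \<ge> b)"
| "rel_sem Gt a b = (a > b)"
| "rel_sem Ne a b = (a \<noteq> b)"

fun sat :: "('v \<Rightarrow> stream) \<Rightarrow> 'v sconstr \<Rightarrow> bool" where
  "sat A (Rel R a b) = (\<forall>i. rel_sem R (eval A a i) (eval A b i))"
| "sat A (Impl a b) = (\<forall>i. eval A a i \<noteq> 0 \<longrightarrow> eval A b i \<noteq> 0)"
| "sat A (Until a b) = (\<exists>i. (\<forall>j<i. eval A a j \<noteq> 0) \<and> eval A b i \<noteq> 0)"

fun vars_e :: "'v sexpr \<Rightarrow> 'v set" where
  "vars_e (Var x) = {x}"
| "vars_e (Const s) = {}"
| "vars_e (Op1 f a) = vars_e a"
| "vars_e (Op2 f a b) = vars_e a \<union> vars_e b"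
| "vars_e (Op3 f a b c) = vars_e a \<union> vars_e b \<union> vars_e c"
| "vars_e (First a) = vars_e a"
| "vars_e (Next a) = vars_e a"
| "vars_e (Fby a b) = vars_e a \<union> vars_e b"

fun vars_c :: "'v sconstr \<Rightarrow> 'v set" where
  "vars_c (Rel R a b) = vars_e a \<union> vars_e b"
| "vars_c (Impl a b) = vars_e a \<union> vars_e b"
| "vars_c (Until a b) = vars_e a \<union> vars_e b"

definition vars_cs :: "'v sconstr set \<Rightarrow> 'v set" where
  "vars_cs C = (\<Union>c\<in>C. vars_c c)"

datatype 'v ectx =
    Hole
  | COp1 "int \<Rightarrow> int" "'v ectx"
  | COp2L "int \<Rightarrow> int \<Rightarrow> int" "'v ectx" "'v sexpr"
  | COp2R "int \<Rightarrow> int \<Rightarrow> int" "'v sexpr" "'v ectx"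
  | COp3A "int \<Rightarrow> int \<Rightarrow> int \<Rightarrow> int" "'v ectx" "'v sexpr" "'v sexpr"
  | COp3B "int \<Rightarrow> int \<Rightarrow> int \<Rightarrow> int" "'v sexpr" "'v ectx" "'v sexpr"
  | COp3C "int \<Rightarrow> int \<Rightarrow> int \<Rightarrow> int" "'v sexpr" "'v sexpr" "'v ectx"
  | CFirst "'v ectx"
  | CNext "'v ectx"
  | CFbyL "'v ectx" "'v sexpr"
  | CFbyR "'v sexpr" "'v ectx"

fun efill :: "'v ectx \<Rightarrow> 'v sexpr \<Rightarrow> 'v sexpr" where
  "efill Hole e = e"
| "efill (COp1 f k) e = Op1 f (efill k e)"
| "efill (COp2L f k b) e = Op2 f (efill k e) b"
| "efill (COp2R f a k) e = Op2 f a (efill k e)"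
| "efill (COp3A f k b c) e = Op3 f (efill k e) b c"
| "efill (COp3B f a k c) e = Op3 f a (efill k e) c"
| "efill (COp3C f a b k) e = Op3 f a b (efill k e)"
| "efill (CFirst k) e = First (efill k e)"
| "efill (CNext k) e = Next (efill k e)"
| "efill (CFbyL k b) e = Fby (efill k e) b"
| "efill (CFbyR a k) e = Fby a (efill k e)"

text \<open>Constraint contexts c[_]: a constraint with one expression occurrence replaced by a hole.\<close>
datatype 'v cctx =
    CRelL rel "'v ectx" "'v sexpr"
  | CRelR rel "'v sexpr" "'v ectx"
  | CImplL "'v ectx" "'v sexpr"
  | CImplR "'v sexpr" "'v ectx"
  | CUntilL "'v ectx" "'v sexpr"
  | CUntilR "'v sexpr" "'v ectx"

fun cfill :: "'v cctx \<Rightarrow> 'v sexpr \<Rightarrow> 'v sconstr" where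
  "cfill (CRelL R k b) e = Rel R (efill k e) b"
| "cfill (CRelR R a k) e = Rel R a (efill k e)"
| "cfill (CImplL k b) e = Impl (efill k e) b"
| "cfill (CImplR a k) e = Impl a (efill k e)"
| "cfill (CUntilL k b) e = Until (efill k e) b"
| "cfill (CUntilR a k) e = Until a (efill k e)"

text \<open>One rewriting step on states (C0, C1, Y), where Y records the auxiliary variables
introduced so far; X is the variable set of the original problem.\<close>
definition fresh :: "'v set \<Rightarrow> 'v set \<Rightarrow> 'v sconstr set \<Rightarrow> 'v sconstr set \<Rightarrow> 'v \<Rightarrow> bool" where
  "fresh X Y C0 C1 x \<longleftrightarrow> x \<notin> X \<and> x \<notin> Y \<and> x \<notin> vars_cs C0 \<and> x \<notin> vars_cs C1"

inductive rw_step :: "'v set \<Rightarrow> ('v sconstr set \<times> 'v sconstr set \<times> 'v set)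
      \<Rightarrow> ('v sconstr set \<times> 'v sconstr set \<times> 'v set) \<Rightarrow> bool" for X where
  R1: "\<lbrakk> cfill c (Next e) \<in> C0; fresh X Y C0 C1 x1; fresh X Y C0 C1 x2; x1 \<noteq> x2 \<rbrakk> \<Longrightarrow>
       rw_step X (C0, C1, Y)
         ((C0 - {cfill c (Next e)}) \<union> {cfill c (Var x1), Rel Eq (Var x2) e},
          C1 \<union> {Rel Eq (Var x1) (Next (Var x2))},
          Y \<union> {x1, x2})"
| R2: "\<lbrakk> cfill c (Fby e1 e2) \<in> C0; fresh X Y C0 C1 x1; fresh X Y C0 C1 x2; fresh X Y C0 C1 x3;
        x1 \<noteq> x2; x1 \<noteq> x3; x2 \<noteq> x3 \<rbrakk> \<Longrightarrow>
       rw_step X (C0, C1, Y)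
         ((C0 - {cfill c (Fby e1 e2)}) \<union> {cfill c (Var x1), Rel Eq (Var x2) e1, Rel Eq (Var x3) e2},
          C1 \<union> {Rel Eq (First (Var x1)) (First (Var x2)), Rel Eq (Var x3) (Next (Var x1))},
          Y \<union> {x1, x2, x3})"
| R3: "\<lbrakk> Until e1 e2 \<in> C0; fresh X Y C0 C1 x1; fresh X Y C0 C1 x2; x1 \<noteq> x2 \<rbrakk> \<Longrightarrow>
       rw_step X (C0, C1, Y)
         ((C0 - {Until e1 e2}) \<union> {Rel Eq (Var x1) e1, Rel Eq (Var x2) e2},
          C1 \<union> {Until (Var x1) (Var x2)},
          Y \<union> {x1, x2})"

text \<open>St-CSP: variables X, alphabets Sg (domain D(x) = Sg(x)^omega), constraints C.
An assignment is a function on all variables; only its values on the problem variables matter.\<close>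
definition in_domain :: "'v set \<Rightarrow> ('v \<Rightarrow> int set) \<Rightarrow> ('v \<Rightarrow> stream) \<Rightarrow> bool" where
  "in_domain X Sg A \<longleftrightarrow> (\<forall>x\<in>X. \<forall>i. A x i \<in> Sg x)"

definition is_sol :: "'v set \<Rightarrow> ('v \<Rightarrow> int set) \<Rightarrow> 'v sconstr set \<Rightarrow> ('v \<Rightarrow> stream) \<Rightarrow> bool" where
  "is_sol X Sg C A \<longleftrightarrow> in_domain X Sg A \<and> (\<forall>c\<in>C. sat A c)"

end

theory Submission
  imports Defs
begin

text \<open>Each rewriting step replaces a constraint d by constraints E whose new variables N
merely name subterms of d: every solution of d extends, by evaluating these subterms, to a
solution of E, and every solution of E satisfies d. Hence the solutions of the old constraint
set are exactly the restrictions of the solutions of the new one (forgetting N), and this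
relation composes along a derivation. The domain conditions only involve X, which the
auxiliary variables avoid.\<close>

definition sats :: "('v \<Rightarrow> stream) \<Rightarrow> 'v sconstr set \<Rightarrow> bool" where
  "sats A S \<longleftrightarrow> (\<forall>c\<in>S. sat A c)"

definition conservative_extension :: "'v set \<Rightarrow> 'v sconstr set \<Rightarrow> 'v sconstr set \<Rightarrow> bool" where
  "conservative_extension N S S' \<longleftrightarrow>
     (\<forall>A. sats A S \<longleftrightarrow> (\<exists>B. (\<forall>x. x \<notin> N \<longrightarrow> B x = A x) \<and> sats B S'))"

lemma sats_insert [simp]: "sats A (insert c S) \<longleftrightarrow> sat A c \<and> sats A S"
  and sats_empty [simp]: "sats A {}"
  by (auto simp: sats_def)

lemma sat_Rel_Eq_iff [simp]: "sat A (Rel Eq a b) \<longleftrightarrow> eval A a = eval A b"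
  by (auto simp: fun_eq_iff)

lemma eval_cong: "(\<And>x. x \<in> vars_e e \<Longrightarrow> A x = B x) \<Longrightarrow> eval A e = eval B e"
  by (induction e) auto

lemma sat_cong: "(\<And>x. x \<in> vars_c c \<Longrightarrow> A x = B x) \<Longrightarrow> sat A c = sat B c"
  by (cases c) (auto simp: eval_cong[of _ A B])

lemma sats_cong: "(\<And>x. x \<in> vars_cs S \<Longrightarrow> A x = B x) \<Longrightarrow> sats A S = sats B S"
  unfolding sats_def vars_cs_def by (metis UN_I sat_cong)

lemma eval_efill_cong: "eval A e = eval A e' \<Longrightarrow> eval A (efill k e) = eval A (efill k e')"
  by (induction k) auto

lemma sat_cfill_cong: "eval A e = eval A e' \<Longrightarrow> sat A (cfill c e) = sat A (cfill c e')"
  by (cases c) (auto simp: eval_efill_cong[of A e e'])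

lemma vars_c_subset_vars_cs: "c \<in> S \<Longrightarrow> vars_c c \<subseteq> vars_cs S"
  by (auto simp: vars_cs_def)

lemma vars_e_efill: "vars_e e \<subseteq> vars_e (efill k e)"
  by (induction k) auto

lemma vars_e_cfill: "vars_e e \<subseteq> vars_c (cfill c e)"
  using vars_e_efill[of e] by (cases c) force+

lemma conservative_extension_refl: "conservative_extension {} S S"
  by (simp add: conservative_extension_def flip: fun_eq_iff)

lemma conservative_extension_trans:
  assumes "conservative_extension N S S'" and "conservative_extension N' S' S''"
  shows "conservative_extension (N \<union> N') S S''"
  unfolding conservative_extension_def
proof (intro allI iffI)
  fix A assume "sats A S"
  then obtain B where "\<forall>x. x \<notin> N \<longrightarrow> B x = A x" "sats B S'"
    using assms(1) by (auto simp: conservative_extension_def)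
  moreover from \<open>sats B S'\<close> obtain B' where "\<forall>x. x \<notin> N' \<longrightarrow> B' x = B x" "sats B' S''"
    using assms(2) by (auto simp: conservative_extension_def)
  ultimately show "\<exists>B'. (\<forall>x. x \<notin> N \<union> N' \<longrightarrow> B' x = A x) \<and> sats B' S''"
    by (intro exI[of _ B']) auto
next
  fix A assume "\<exists>B'. (\<forall>x. x \<notin> N \<union> N' \<longrightarrow> B' x = A x) \<and> sats B' S''"
  then obtain B' where B': "\<forall>x. x \<notin> N \<union> N' \<longrightarrow> B' x = A x" "sats B' S''"
    by blast
  define B where "B x = (if x \<in> N' then A x else B' x)" for x
  have "sats B S'"
    using assms(2) B'(2) by (auto simp: conservative_extension_def B_def)
  moreover have "\<forall>x. x \<notin> N \<longrightarrow> B x = A x"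
    using B'(1) by (auto simp: B_def)
  ultimately show "sats A S"
    using assms(1) by (auto simp: conservative_extension_def)
qed

lemma conservative_extension_replace:
  assumes "conservative_extension N {d} E" and "N \<inter> vars_cs S = {}"
    and "d \<in> S" and "S - {d} \<subseteq> S'" and "E \<subseteq> S'" and "S' \<subseteq> S \<union> E"
  shows "conservative_extension N S S'"
  unfolding conservative_extension_def
proof (intro allI iffI)
  fix A assume "sats A S"
  then have "sats A {d}"
    using assms(3) by (simp add: sats_def)
  then obtain B where B: "\<forall>x. x \<notin> N \<longrightarrow> B x = A x" "sats B E"
    using assms(1) unfolding conservative_extension_def by blast
  have "sats B S = sats A S"
    using B(1) assms(2) by (intro sats_cong) blast
  with \<open>sats A S\<close> have "sats B S"
    by simp
  then show "\<exists>B. (\<forall>x. x \<notin> N \<longrightarrow> B x = A x) \<and> sats B S'"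
    using B assms(6) by (intro exI[of _ B]) (auto simp: sats_def)
next
  fix A assume "\<exists>B. (\<forall>x. x \<notin> N \<longrightarrow> B x = A x) \<and> sats B S'"
  then obtain B where B: "\<forall>x. x \<notin> N \<longrightarrow> B x = A x" "sats B S'"
    by blast
  have "sats B E"
    using B(2) assms(5) by (auto simp: sats_def)
  then have "sats A {d}"
    using assms(1) B(1) unfolding conservative_extension_def by blast
  moreover have "sat A c" if "c \<in> S - {d}" for c
  proof -
    have "vars_c c \<inter> N = {}"
      using that assms(2) vars_c_subset_vars_cs[of c S] by blast
    then have "sat A c = sat B c"
      using B(1) by (intro sat_cong) auto
    then show ?thesis
      using that assms(4) B(2) by (auto simp: sats_def)
  qed
  ultimately show "sats A S"
    by (auto simp: sats_def)
qed

lemma conservative_extension_abstract_subterm: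
  assumes "x \<in> N" and "N \<inter> vars_c (cfill c t) = {}"
    and extend: "\<And>A. \<exists>B. (\<forall>y. y \<notin> N \<longrightarrow> B y = A y) \<and> sats B D"
    and names: "\<And>B. sats B D \<Longrightarrow> eval B (Var x) = eval B t"
  shows "conservative_extension N {cfill c t} (insert (cfill c (Var x)) D)"
  unfolding conservative_extension_def
proof (intro allI iffI)
  fix A assume "sats A {cfill c t}"
  obtain B where B: "\<forall>y. y \<notin> N \<longrightarrow> B y = A y" "sats B D"
    using extend by blast
  have "sat B (cfill c t) = sat A (cfill c t)"
    using assms(2) B(1) by (intro sat_cong) auto
  then have "sat B (cfill c (Var x))"
    using \<open>sats A {cfill c t}\<close> sat_cfill_cong[OF names[OF B(2)]] by simp
  then show "\<exists>B. (\<forall>y. y \<notin> N \<longrightarrow> B y = A y) \<and> sats B (insert (cfill c (Var x)) D)"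
    using B by auto
next
  fix A assume "\<exists>B. (\<forall>y. y \<notin> N \<longrightarrow> B y = A y) \<and> sats B (insert (cfill c (Var x)) D)"
  then obtain B where B: "\<forall>y. y \<notin> N \<longrightarrow> B y = A y" "sat B (cfill c (Var x))" "sats B D"
    by auto
  then have "sat B (cfill c t)"
    using sat_cfill_cong[OF names[OF B(3)]] by simp
  moreover have "sat B (cfill c t) = sat A (cfill c t)"
    using assms(2) B(1) by (intro sat_cong) auto
  ultimately show "sats A {cfill c t}"
    by simp
qed

lemma conservative_extension_Next:
  assumes "x1 \<noteq> x2" and "x1 \<notin> vars_c (cfill c (Next e))" and "x2 \<notin> vars_c (cfill c (Next e))"
  shows "conservative_extension {x1, x2} {cfill c (Next e)}
           {cfill c (Var x1), Rel Eq (Var x2) e, Rel Eq (Var x1) (Next (Var x2))}"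
proof (rule conservative_extension_abstract_subterm)
  show "{x1, x2} \<inter> vars_c (cfill c (Next e)) = {}"
    using assms(2,3) by blast
next
  fix A
  define B where "B = A(x2 := eval A e, x1 := eval A (Next e))"
  have "eval B e = eval A e"
    by (rule eval_cong) (use assms vars_e_cfill[of "Next e" c] in \<open>auto simp: B_def\<close>)
  then show "\<exists>B. (\<forall>y. y \<notin> {x1, x2} \<longrightarrow> B y = A y) \<and>
      sats B {Rel Eq (Var x2) e, Rel Eq (Var x1) (Next (Var x2))}"
    using assms(1) by (intro exI[of _ B]) (auto simp: B_def)
next
  fix B assume "sats B {Rel Eq (Var x2) e, Rel Eq (Var x1) (Next (Var x2))}"
  then show "eval B (Var x1) = eval B (Next e)"
    by (simp add: fun_eq_iff)
qed simp

lemma conservative_extension_Fby: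
  assumes "x1 \<noteq> x2" and "x1 \<noteq> x3" and "x2 \<noteq> x3"
    and "x1 \<notin> vars_c (cfill c (Fby e1 e2))" and "x2 \<notin> vars_c (cfill c (Fby e1 e2))"
    and "x3 \<notin> vars_c (cfill c (Fby e1 e2))"
  shows "conservative_extension {x1, x2, x3} {cfill c (Fby e1 e2)}
           {cfill c (Var x1), Rel Eq (Var x2) e1, Rel Eq (Var x3) e2,
            Rel Eq (First (Var x1)) (First (Var x2)), Rel Eq (Var x3) (Next (Var x1))}"
proof (rule conservative_extension_abstract_subterm)
  show "{x1, x2, x3} \<inter> vars_c (cfill c (Fby e1 e2)) = {}"
    using assms(4-6) by blast
next
  fix A
  define B where "B = A(x3 := eval A e2, x2 := eval A e1, x1 := eval A (Fby e1 e2))"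
  have e: "eval B e1 = eval A e1" "eval B e2 = eval A e2"
    by (rule eval_cong; use assms vars_e_cfill[of "Fby e1 e2" c] in \<open>auto simp: B_def\<close>)+
  have "eval B (Var x2) = eval B e1" "eval B (Var x3) = eval B e2"
    using assms(1-3) by (simp_all add: e, simp_all add: B_def)
  moreover have "eval B (First (Var x1)) = eval B (First (Var x2))"
    "eval B (Var x3) = eval B (Next (Var x1))"
    using assms(1-3) by (simp_all add: B_def fun_eq_iff)
  ultimately show "\<exists>B. (\<forall>y. y \<notin> {x1, x2, x3} \<longrightarrow> B y = A y) \<and>
      sats B {Rel Eq (Var x2) e1, Rel Eq (Var x3) e2,
        Rel Eq (First (Var x1)) (First (Var x2)), Rel Eq (Var x3) (Next (Var x1))}"
    by (intro exI[of _ B]) (auto simp: B_def)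
next
  fix B assume "sats B {Rel Eq (Var x2) e1, Rel Eq (Var x3) e2,
      Rel Eq (First (Var x1)) (First (Var x2)), Rel Eq (Var x3) (Next (Var x1))}"
  then have E: "\<And>i. B x2 i = eval B e1 i" "\<And>i. B x3 i = eval B e2 i"
      "B x1 0 = B x2 0" "\<And>i. B x3 i = B x1 (Suc i)"
    unfolding sats_insert sats_empty sat_Rel_Eq_iff eval.simps fun_eq_iff by blast+
  show "eval B (Var x1) = eval B (Fby e1 e2)"
  proof
    fix i show "eval B (Var x1) i = eval B (Fby e1 e2) i"
      by (cases i) (simp_all add: E(1,3) E(2)[symmetric] E(4))
  qed
qed simp

lemma conservative_extension_Until:
  assumes "x1 \<noteq> x2" and "x1 \<notin> vars_c (Until e1 e2)" and "x2 \<notin> vars_c (Until e1 e2)"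
  shows "conservative_extension {x1, x2} {Until e1 e2}
           {Rel Eq (Var x1) e1, Rel Eq (Var x2) e2, Until (Var x1) (Var x2)}"
  unfolding conservative_extension_def
proof (intro allI iffI)
  fix A assume "sats A {Until e1 e2}"
  define B where "B = A(x2 := eval A e2, x1 := eval A e1)"
  have e: "eval B e1 = eval A e1" "eval B e2 = eval A e2"
    by (rule eval_cong; use assms in \<open>auto simp: B_def\<close>)+
  show "\<exists>B. (\<forall>x. x \<notin> {x1, x2} \<longrightarrow> B x = A x) \<and>
      sats B {Rel Eq (Var x1) e1, Rel Eq (Var x2) e2, Until (Var x1) (Var x2)}"
    using assms(1) e \<open>sats A {Until e1 e2}\<close> by (intro exI[of _ B]) (auto simp: B_def)
next
  fix A assume "\<exists>B. (\<forall>x. x \<notin> {x1, x2} \<longrightarrow> B x = A x) \<and>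
      sats B {Rel Eq (Var x1) e1, Rel Eq (Var x2) e2, Until (Var x1) (Var x2)}"
  then obtain B where B: "\<forall>x. x \<notin> {x1, x2} \<longrightarrow> B x = A x"
    and "sats B {Rel Eq (Var x1) e1, Rel Eq (Var x2) e2, Until (Var x1) (Var x2)}"
    by blast
  then have "B x1 = eval B e1" "B x2 = eval B e2" "sat B (Until (Var x1) (Var x2))"
    by (simp_all del: sat.simps)
  then have "sat B (Until e1 e2)"
    by simp
  moreover have "sat B (Until e1 e2) = sat A (Until e1 e2)"
    by (rule sat_cong) (use assms B in auto)
  ultimately show "sats A {Until e1 e2}"
    by simp
qed

lemma fresh_not_in_vars: "fresh X Y C0 C1 x \<Longrightarrow> x \<notin> vars_cs (C0 \<union> C1)"
  by (auto simp: fresh_def vars_cs_def)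

lemma fresh_not_in_vars_c: "fresh X Y C0 C1 x \<Longrightarrow> d \<in> C0 \<union> C1 \<Longrightarrow> x \<notin> vars_c d"
  using fresh_not_in_vars[of X Y C0 C1 x] vars_c_subset_vars_cs[of d "C0 \<union> C1"] by blast

lemma rw_step_conservative_extension:
  assumes "rw_step X (C0, C1, Y) (C0', C1', Y')"
  shows "\<exists>N. Y' = Y \<union> N \<and> N \<inter> X = {} \<and> conservative_extension N (C0 \<union> C1) (C0' \<union> C1')"
  using assms
proof cases
  case (R1 c e x1 x2)
  then have d: "cfill c (Next e) \<in> C0 \<union> C1"
    by simp
  have "conservative_extension {x1, x2} {cfill c (Next e)}
      {cfill c (Var x1), Rel Eq (Var x2) e, Rel Eq (Var x1) (Next (Var x2))}"
    using R1(7) fresh_not_in_vars_c[OF R1(5) d] fresh_not_in_vars_c[OF R1(6) d]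
    by (rule conservative_extension_Next)
  moreover have "{x1, x2} \<inter> vars_cs (C0 \<union> C1) = {}"
    using fresh_not_in_vars[OF R1(5)] fresh_not_in_vars[OF R1(6)] by blast
  ultimately have "conservative_extension {x1, x2} (C0 \<union> C1) (C0' \<union> C1')"
    using d by (rule conservative_extension_replace) (auto simp: R1(1,2))
  then show ?thesis
    using R1(3,5,6) by (intro exI[of _ "{x1, x2}"]) (auto simp: fresh_def)
next
  case (R2 c e1 e2 x1 x2 x3)
  then have d: "cfill c (Fby e1 e2) \<in> C0 \<union> C1"
    by simp
  have "conservative_extension {x1, x2, x3} {cfill c (Fby e1 e2)}
      {cfill c (Var x1), Rel Eq (Var x2) e1, Rel Eq (Var x3) e2,
       Rel Eq (First (Var x1)) (First (Var x2)), Rel Eq (Var x3) (Next (Var x1))}"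
    using R2(8-10) fresh_not_in_vars_c[OF R2(5) d] fresh_not_in_vars_c[OF R2(6) d]
      fresh_not_in_vars_c[OF R2(7) d]
    by (rule conservative_extension_Fby)
  moreover have "{x1, x2, x3} \<inter> vars_cs (C0 \<union> C1) = {}"
    using fresh_not_in_vars[OF R2(5)] fresh_not_in_vars[OF R2(6)] fresh_not_in_vars[OF R2(7)]
    by blast
  ultimately have "conservative_extension {x1, x2, x3} (C0 \<union> C1) (C0' \<union> C1')"
    using d by (rule conservative_extension_replace) (auto simp: R2(1,2))
  then show ?thesis
    using R2(3,5-7) by (intro exI[of _ "{x1, x2, x3}"]) (auto simp: fresh_def)
next
  case (R3 e1 e2 x1 x2)
  then have d: "Until e1 e2 \<in> C0 \<union> C1"
    by simp
  have "conservative_extension {x1, x2} {Until e1 e2}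
      {Rel Eq (Var x1) e1, Rel Eq (Var x2) e2, Until (Var x1) (Var x2)}"
    using R3(7) fresh_not_in_vars_c[OF R3(5) d] fresh_not_in_vars_c[OF R3(6) d]
    by (rule conservative_extension_Until)
  moreover have "{x1, x2} \<inter> vars_cs (C0 \<union> C1) = {}"
    using fresh_not_in_vars[OF R3(5)] fresh_not_in_vars[OF R3(6)] by blast
  ultimately have "conservative_extension {x1, x2} (C0 \<union> C1) (C0' \<union> C1')"
    using d by (rule conservative_extension_replace) (auto simp: R3(1,2))
  then show ?thesis
    using R3(3,5,6) by (intro exI[of _ "{x1, x2}"]) (auto simp: fresh_def)
qed

lemma rw_steps_conservative_extension:
  assumes "(rw_step X)\<^sup>*\<^sup>* (C, {}, {}) (C0, C1, Y)"
  shows "Y \<inter> X = {} \<and> conservative_extension Y C (C0 \<union> C1)"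
  using assms
proof (induction rule: rtranclp_induct[of "rw_step X" "(C, {}, {})" "(C0, C1, Y)", split_format (complete)])
  case base
  then show ?case
    using conservative_extension_refl by simp
next
  case (step C0 C1 Y C0' C1' Y')
  obtain N where "Y' = Y \<union> N" "N \<inter> X = {}"
    and "conservative_extension N (C0 \<union> C1) (C0' \<union> C1')"
    using rw_step_conservative_extension[OF step.hyps(2)] by blast
  then show ?case
    using step.IH conservative_extension_trans[of Y C "C0 \<union> C1" N] by auto
qed

lemma is_sol_iff: "is_sol X Sg S A \<longleftrightarrow> in_domain X Sg A \<and> sats A S"
  by (simp add: is_sol_def sats_def)

lemma is_sol_aux_vars_iff:
  "is_sol (X \<union> Y) (\<lambda>x. if x \<in> X then Sg x else UNIV) S B \<longleftrightarrow> in_domain X Sg B \<and> sats B S"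
  by (auto simp: is_sol_iff in_domain_def)

lemma in_domain_cong: "(\<And>x. x \<in> X \<Longrightarrow> A x = B x) \<Longrightarrow> in_domain X Sg A = in_domain X Sg B"
  by (simp add: in_domain_def)

lemma conservative_extension_is_sol_iff:
  assumes ext: "conservative_extension Y C C'" and "Y \<inter> X = {}" and "vars_cs C \<subseteq> X"
  shows "is_sol X Sg C A \<longleftrightarrow>
           (\<exists>B. (\<forall>x\<in>X. B x = A x) \<and> is_sol (X \<union> Y) (\<lambda>x. if x \<in> X then Sg x else UNIV) C' B)"
  unfolding is_sol_aux_vars_iff unfolding is_sol_iff
proof
  assume A: "in_domain X Sg A \<and> sats A C"
  then obtain B where B: "\<forall>x. x \<notin> Y \<longrightarrow> B x = A x" "sats B C'"
    using ext unfolding conservative_extension_def by blast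
  then have "\<forall>x\<in>X. B x = A x"
    using assms(2) by blast
  moreover from this have "in_domain X Sg B"
    using A in_domain_cong[of X B A Sg] by simp
  ultimately show "\<exists>B. (\<forall>x\<in>X. B x = A x) \<and> in_domain X Sg B \<and> sats B C'"
    using B(2) by blast
next
  assume "\<exists>B. (\<forall>x\<in>X. B x = A x) \<and> in_domain X Sg B \<and> sats B C'"
  then obtain B where B: "\<forall>x\<in>X. B x = A x" "in_domain X Sg B" "sats B C'"
    by blast
  then have "sats B C"
    using ext unfolding conservative_extension_def by blast
  moreover have "sats B C = sats A C"
    using B(1) assms(3) by (intro sats_cong) auto
  moreover have "in_domain X Sg B = in_domain X Sg A"
    using B(1) by (intro in_domain_cong) auto
  ultimately show "in_domain X Sg A \<and> sats A C"
    using B(2) by simp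
qed

theorem proposition3:
  fixes X :: "'v set" and Sg :: "'v \<Rightarrow> int set" and C C0 C1 :: "'v sconstr set"
    and Y :: "'v set"
  assumes "finite X" and "\<forall>x\<in>X. finite (Sg x)"
    and "finite C" and "vars_cs C \<subseteq> X"
    and "(rw_step X)\<^sup>*\<^sup>* (C, {}, {}) (C0, C1, Y)"
  shows "is_sol X Sg C A \<longleftrightarrow>
           (\<exists>B. (\<forall>x\<in>X. B x = A x) \<and> is_sol (X \<union> Y) (\<lambda>x. if x \<in> X then Sg x else UNIV) (C0 \<union> C1) B)"
proof -
  have "conservative_extension Y C (C0 \<union> C1)" and "Y \<inter> X = {}"
    using rw_steps_conservative_extension[OF assms(5)] by auto
  then show ?thesis
    using assms(4) by (rule conservative_extension_is_sol_iff)
qed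

end
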